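(* Consider the ViSE model described in the context, with $n$ participants, $\ell$ egoists and $g=n-\ell$ group members ($1\le \ell\le n-1$), environment parameters $\mu\in\mathbb{R}$, $\sigma>0$, majority threshold $\alpha\in[0,1]$ and group claims threshold $t\in\mathbb{R}$. Let $\gamma=\alpha+\delta-1$ with $\delta=\ell/n$, let $P=F\!\left(\frac{(\mu-t)\sqrt{g}}{\sigma}\right)$ and $Q=1-P$. Then the mathematical expectation of the capital increment $\widetilde{d}_{\mathcal{E}}$ of a (fixed) egoist in one voting step is $$\mathrm{M}(\widetilde{d}_{\mathcal{E}})=\mu^+(\mu,\sigma,\ell,\gamma n)\,P+\mu^+(\mu,\sigma,\ell,\alpha n)\,Q .$$
   Context: ViSE model (one voting step). A society consists of $n$ participants: $\ell$ "egoists" and $g=n-\ell$ "group members", with $1\le\ell\le n-1$; $\delta=\ell/n$ is the proportion of egoists. Fix $\mu\in\mathbb{R}$, $\sigma>0$, a majority threshold $\alpha\in[0,1]$ and a group claims threshold $t\in\mathbb{R}$. A proposal is a random vector $(\zeta_1,\dots,\zeta_n)$ of independent $N(\mu,\sigma^2)$ random variables, $\zeta_i$ being the proposed capital increment of participant $i$. Each egoist votes for the proposal iff his own component is strictly positive. All group members vote for the proposal iff the arithmetic mean of the components of the group members is strictly greater than $t$; otherwise they all vote against. The proposal is accepted iff the number of votes for it is strictly greater than $\alpha n$. If accepted, each participant's capital increment equals his component; otherwise every participant's capital increment is $0$. $F$ and $f$ denote the standard normal distribution function and density. For an integer $\ell\ge1$ and real $\ell_0$, $\mu^+(\mu,\sigma,\ell,\ell_0)$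 denotes the expectation of the "normal voting sample": if $\xi_1,\dots,\xi_\ell$ are i.i.d. $N(\mu,\sigma^2)$ and $N=\#\{i:\xi_i>0\}$, then $\mu^+(\mu,\sigma,\ell,\ell_0)=\mathrm{M}\big(\xi_1\cdot\mathbf{1}\{N>\ell_0\}\big)$, i.e. the expected increment of a member of a society of $\ell$ egoists when a proposal is accepted iff more than $\ell_0$ of them receive positive increments. *)

theory Defs
  imports "HOL-Probability.Probability"
begin

definition std_normal_cdf :: "real \<Rightarrow> real" where
  "std_normal_cdf x = cdf (density lborel std_normal_density) x"

definition proposal_space :: "nat \<Rightarrow> real \<Rightarrow> real \<Rightarrow> (nat \<Rightarrow> real) measure" where
  "proposal_space m \<mu> \<sigma> = PiM {..<m} (\<lambda>_. density lborel (normal_density \<mu> \<sigma>))"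

definition mu_plus :: "real \<Rightarrow> real \<Rightarrow> nat \<Rightarrow> real \<Rightarrow> real" where
  "mu_plus \<mu> \<sigma> l l0 =
     integral\<^sup>L (proposal_space l \<mu> \<sigma>)
       (\<lambda>\<xi>. \<xi> 0 * (if real (card {i. i < l \<and> \<xi> i > 0}) > l0 then 1 else 0))"

text \<open>ViSE model, one step: participants 0..l-1 are egoists, l..n-1 group members.\<close>
definition vise_votes_for :: "nat \<Rightarrow> nat \<Rightarrow> real \<Rightarrow> (nat \<Rightarrow> real) \<Rightarrow> nat" where
  "vise_votes_for n l t \<zeta> =
     card {i. i < l \<and> \<zeta> i > 0}
     + (if (\<Sum>i\<in>{l..<n}. \<zeta> i) / real (n - l) > t then n - l else 0)"

definition vise_accepted :: "nat \<Rightarrow> nat \<Rightarrow> real \<Rightarrow> real \<Rightarrow> (nat \<Rightarrow> real) \<Rightarrow> bool" where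
  "vise_accepted n l \<alpha> t \<zeta> \<longleftrightarrow> real (vise_votes_for n l t \<zeta>) > \<alpha> * real n"

definition vise_increment :: "nat \<Rightarrow> nat \<Rightarrow> real \<Rightarrow> real \<Rightarrow> (nat \<Rightarrow> real) \<Rightarrow> nat \<Rightarrow> real" where
  "vise_increment n l \<alpha> t \<zeta> i = (if vise_accepted n l \<alpha> t \<zeta> then \<zeta> i else 0)"

end

theory Submission
  imports Defs
begin

text \<open>
  The egoists' components and the group members' components of a proposal are independent.
  The group votes in favour exactly when the sum of its \<open>g\<close> components, a normal variable with
  mean \<open>g\<mu>\<close> and standard deviation \<open>\<sigma>\<surd>g\<close>, exceeds \<open>gt\<close>, which happens with probability \<open>P\<close>.
  Given the group's decision, the proposal passes iff more than \<open>\<alpha>n - g = \<gamma>n\<close> (group in favour)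
  resp. \<open>\<alpha>n\<close> (group against) egoists gain, so Fubini splits the expectation into
  \<open>P\<close> and \<open>Q\<close> times the expected gain of egoist \<open>e\<close> in an all-egoist society with these
  thresholds. Exchangeability of the egoists' components identifies the latter with \<open>\<mu>\<^sup>+\<close>.
\<close>

abbreviation normal_measure :: "real \<Rightarrow> real \<Rightarrow> real measure" where
  "normal_measure \<mu> \<sigma> \<equiv> density lborel (\<lambda>x. ennreal (normal_density \<mu> \<sigma> x))"

definition egoist_gain :: "nat \<Rightarrow> real \<Rightarrow> nat \<Rightarrow> (nat \<Rightarrow> real) \<Rightarrow> real" where
  "egoist_gain l l0 e \<xi> = \<xi> e * (if real (card {i. i < l \<and> 0 < \<xi> i}) > l0 then 1 else 0)"

lemma mu_plus_eq_integral_egoist_gain: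
  "mu_plus \<mu> \<sigma> l l0 = integral\<^sup>L (proposal_space l \<mu> \<sigma>) (egoist_gain l l0 0)"
  unfolding mu_plus_def egoist_gain_def[abs_def] ..

lemma card_positive_eq_sum:
  "real (card {i. i < (l::nat) \<and> 0 < x i}) = (\<Sum>i<l. of_bool (0 < (x i :: real)))"
  by (simp add: Collect_conj_eq lessThan_def[symmetric])

lemma measurable_card_positive:
  assumes "{..<(l::nat)} \<subseteq> I" and "sets M = sets borel"
  shows "(\<lambda>x. real (card {i. i < l \<and> 0 < (x i :: real)})) \<in> borel_measurable (PiM I (\<lambda>_. M))"
proof -
  have "(\<lambda>x. of_bool (0 < x i) :: real) \<in> borel_measurable (PiM I (\<lambda>_. M))" if "i < l" for i
  proof -
    have [measurable]: "(\<lambda>x. x i) \<in> borel_measurable (PiM I (\<lambda>_. M))"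
      unfolding measurable_cong_sets[OF refl assms(2), symmetric]
      using assms(1) that by (intro measurable_component_singleton) auto
    show ?thesis by measurable
  qed
  then show ?thesis unfolding card_positive_eq_sum by (intro borel_measurable_sum) auto
qed

lemma measurable_egoist_gain:
  assumes "{..<l} \<subseteq> I" and "e \<in> I" and "sets M = sets borel"
  shows "egoist_gain l c e \<in> borel_measurable (PiM I (\<lambda>_. M))"
proof -
  note [measurable] = measurable_card_positive[OF assms(1,3)]
  have [measurable]: "(\<lambda>x. x e) \<in> borel_measurable (PiM I (\<lambda>_. M))"
    unfolding measurable_cong_sets[OF refl assms(3), symmetric]
    using assms(2) by (rule measurable_component_singleton)
  show ?thesis unfolding egoist_gain_def[abs_def] by measurable
qed

lemma integrable_PiM_component:
  fixes f :: "'a \<Rightarrow> 'b::{banach, second_countable_topology}"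
  assumes "\<And>j. j \<in> I \<Longrightarrow> prob_space (M j)" and "i \<in> I" and "integrable (M i) f"
  shows "integrable (PiM I M) (\<lambda>x. f (x i))"
proof -
  have "integrable (distr (PiM I M) (M i) (\<lambda>x. x i)) f"
    using assms by (simp add: distr_PiM_component)
  then show ?thesis
    by (subst (asm) integrable_distr_eq[OF measurable_component_singleton[of i I M, OF assms(2)]
          borel_measurable_integrable[OF assms(3)]])
qed

lemma integrable_PiM_normal_component:
  assumes "i \<in> I" and "0 < \<sigma>"
  shows "integrable (PiM I (\<lambda>_. normal_measure \<mu> \<sigma>)) (\<lambda>x. x i)"
proof (rule integrable_PiM_component[where f = "\<lambda>x. x"])
  show "integrable (normal_measure \<mu> \<sigma>) (\<lambda>x. x)"
    using assms(2) by (subst integrable_density) (auto intro: integrable_normal_moment_nz_1)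
qed (use assms prob_space_normal_density in auto)

lemma integrable_egoist_gain:
  assumes "{..<l} \<subseteq> I" and "e \<in> I" and "0 < \<sigma>"
  shows "integrable (PiM I (\<lambda>_. normal_measure \<mu> \<sigma>)) (egoist_gain l c e)"
  by (rule Bochner_Integration.integrable_bound[OF integrable_PiM_normal_component[OF assms(2,3)]])
     (use assms measurable_egoist_gain in \<open>auto simp: egoist_gain_def\<close>)

lemma integral_PiM_reindex:
  fixes g :: "('i \<Rightarrow> 'a) \<Rightarrow> 'b::{banach, second_countable_topology}"
  assumes "prob_space M" and "bij_betw f I I" and g: "g \<in> borel_measurable (PiM I (\<lambda>_. M))"
  shows "(\<integral>x. g (\<lambda>i\<in>I. x (f i)) \<partial>PiM I (\<lambda>_. M)) = integral\<^sup>L (PiM I (\<lambda>_. M)) g"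
proof -
  let ?P = "PiM I (\<lambda>_. M)"
  have f: "inj_on f I" "f \<in> I \<rightarrow> I"
    using assms(2) by (auto simp: bij_betw_def)
  have "(\<lambda>x. \<lambda>i\<in>I. x (f i)) \<in> ?P \<rightarrow>\<^sub>M ?P"
    using f by (intro measurable_restrict measurable_component_singleton) auto
  then have "(\<integral>x. g (\<lambda>i\<in>I. x (f i)) \<partial>?P) = integral\<^sup>L (distr ?P ?P (\<lambda>x. \<lambda>i\<in>I. x (f i))) g"
    by (rule integral_distr[symmetric, OF _ g])
  also have "distr ?P ?P (\<lambda>x. \<lambda>i\<in>I. x (f i)) = ?P"
    using distr_PiM_reindex[of I "\<lambda>_. M" f I] assms(1) f by simp
  finally show ?thesis .
qed

lemma egoist_gain_transpose:
  assumes "d < l" and "e < l"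
  shows "egoist_gain l c d (\<lambda>i\<in>{..<l}. x (Transposition.transpose d e i)) = egoist_gain l c e x"
proof -
  let ?\<tau> = "Transposition.transpose d e"
  have "?\<tau> i < l \<longleftrightarrow> i < l" for i
    using assms by (cases "i = d"; cases "i = e") auto
  have "{i. i < l \<and> 0 < (\<lambda>i\<in>{..<l}. x (?\<tau> i)) i} = ?\<tau> -` {i. i < l \<and> 0 < x i}"
    using \<open>\<And>i. ?\<tau> i < l \<longleftrightarrow> i < l\<close> by auto
  moreover have "card (?\<tau> -` {i. i < l \<and> 0 < x i}) = card {i. i < l \<and> 0 < x i}"
    by (rule card_vimage_inj) (simp_all add: inj_transpose surj_transpose)
  ultimately have "card {i. i < l \<and> 0 < (\<lambda>i\<in>{..<l}. x (?\<tau> i)) i} = card {i. i < l \<and> 0 < x i}"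
    by (simp only:)
  then show ?thesis
    using assms by (simp add: egoist_gain_def)
qed

lemma integral_egoist_gain_eq_mu_plus:
  assumes "e < l" and "0 < \<sigma>"
  shows "integral\<^sup>L (proposal_space l \<mu> \<sigma>) (egoist_gain l c e) = mu_plus \<mu> \<sigma> l c"
proof -
  have "bij_betw (Transposition.transpose 0 e) {..<l} {..<l}"
    using assms(1) by (intro bij_betw_imageI) (auto simp: transpose_def)
  from integral_PiM_reindex[OF prob_space_normal_density[OF assms(2)] this
      measurable_egoist_gain[of l "{..<l}" 0]]
  show ?thesis
    using assms by (simp add: egoist_gain_transpose mu_plus_eq_integral_egoist_gain proposal_space_def)
qed

lemma integral_PiM_union_if:
  fixes u v :: "('i \<Rightarrow> 'a) \<Rightarrow> real"
  assumes M: "\<And>i. prob_space (M i)"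
    and IJ: "I \<inter> J = {}" "finite I" "finite J"
    and f: "integrable (PiM (I \<union> J) M) f"
    and u: "integrable (PiM I M) u" and v: "integrable (PiM I M) v"
    and S: "S \<in> sets (PiM J M)"
    and f_merge: "\<And>x y. y \<in> space (PiM J M) \<Longrightarrow> f (merge I J (x, y)) = (if y \<in> S then u x else v x)"
  shows "integral\<^sup>L (PiM (I \<union> J) M) f =
    measure (PiM J M) S * integral\<^sup>L (PiM I M) u + (1 - measure (PiM J M) S) * integral\<^sup>L (PiM I M) v"
proof -
  interpret product_sigma_finite M
    by (simp add: product_sigma_finite_def M prob_space_imp_sigma_finite)
  interpret PJ: prob_space "PiM J M"
    by (intro prob_space_PiM M)
  let ?p = "measure (PiM J M) S"
  have inner: "(\<integral>y. f (merge I J (x, y)) \<partial>PiM J M) = ?p * u x + (1 - ?p) * v x" for x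
  proof -
    have "(\<integral>y. f (merge I J (x, y)) \<partial>PiM J M) = (\<integral>y. v x + (u x - v x) * indicator S y \<partial>PiM J M)"
      by (rule Bochner_Integration.integral_cong) (auto simp: f_merge split: split_indicator)
    also have "\<dots> = v x + (u x - v x) * ?p"
      using S by (simp add: PJ.emeasure_finite less_top[symmetric] PJ.prob_space)
    finally show ?thesis
      by (simp add: algebra_simps)
  qed
  have "integral\<^sup>L (PiM (I \<union> J) M) f = (\<integral>x. (\<integral>y. f (merge I J (x, y)) \<partial>PiM J M) \<partial>PiM I M)"
    by (rule product_integral_fold[OF IJ f])
  also have "\<dots> = (\<integral>x. ?p * u x + (1 - ?p) * v x \<partial>PiM I M)"
    by (simp only: inner)
  also have "\<dots> = ?p * integral\<^sup>L (PiM I M) u + (1 - ?p) * integral\<^sup>L (PiM I M) v"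
    using u v by simp
  finally show ?thesis .
qed

lemma distributed_sum_PiM_normal:
  assumes J: "finite J" "J \<noteq> {}" and "0 < \<sigma>"
  shows "distributed (PiM J (\<lambda>_. normal_measure \<mu> \<sigma>)) lborel (\<lambda>y. \<Sum>i\<in>J. y i)
    (normal_density (real (card J) * \<mu>) (sqrt (real (card J)) * \<sigma>))"
proof -
  let ?N = "normal_measure \<mu> \<sigma>"
  let ?P = "PiM J (\<lambda>_. ?N)"
  interpret P: prob_space ?P
    using \<open>0 < \<sigma>\<close> by (intro prob_space_PiM prob_space_normal_density)
  have component: "distr ?P ?N (\<lambda>y. y i) = ?N" if "i \<in> J" for i
    using that \<open>0 < \<sigma>\<close> by (intro distr_PiM_component prob_space_normal_density)
  have distr_borel: "distr ?P borel (\<lambda>y. y i) = ?N" if "i \<in> J" for i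
  proof -
    have "distr ?P borel (\<lambda>y. y i) = distr ?P ?N (\<lambda>y. y i)"
      by (rule distr_cong) auto
    then show ?thesis using component[OF that] by simp
  qed
  have "distr ?P (PiM J (\<lambda>_. borel)) (\<lambda>y. \<lambda>i\<in>J. y i) = distr ?P ?P (\<lambda>y. y)"
    by (rule distr_cong[OF refl sets_PiM_cong]) (auto simp: space_PiM)
  also have "\<dots> = PiM J (\<lambda>i. distr ?P borel (\<lambda>y. y i))"
    by (auto intro!: PiM_cong simp: distr_borel)
  finally have indep: "P.indep_vars (\<lambda>_. borel) (\<lambda>i y. y i) J"
    using J by (subst P.indep_vars_iff_distr_eq_PiM') auto
  have normal: "distributed ?P lborel (\<lambda>y. y i) (normal_density \<mu> \<sigma>)" if "i \<in> J" for i
    using distr_borel[OF that] that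
    by (auto simp: distributed_def intro: trans[OF distr_cong])
  have "sqrt (real (card J) * \<sigma>\<^sup>2) = sqrt (real (card J)) * \<sigma>"
    using \<open>0 < \<sigma>\<close> by (simp add: real_sqrt_mult)
  with P.sum_indep_normal[OF J(1,2) indep, of "\<lambda>_. \<sigma>" "\<lambda>_. \<mu>"] normal \<open>0 < \<sigma>\<close>
  show ?thesis by simp
qed

lemma measure_density_lessThan_eq_atMost:
  assumes [measurable]: "f \<in> borel_measurable borel"
  shows "measure (density lborel (\<lambda>x. ennreal (f x))) {..<c} = measure (density lborel (\<lambda>x. ennreal (f x))) {..(c::real)}"
proof -
  have "(\<integral>\<^sup>+ x. ennreal (f x) * indicator {..<c} x \<partial>lborel) = (\<integral>\<^sup>+ x. ennreal (f x) * indicator {..c} x \<partial>lborel)"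
    by (rule nn_integral_cong_AE)
       (use AE_lborel_singleton[of c] in \<open>auto elim!: eventually_mono split: split_indicator\<close>)
  then show ?thesis
    by (simp add: measure_def emeasure_density)
qed

lemma prob_PiM_normal_mean_gt:
  assumes J: "finite J" "J \<noteq> {}" and "0 < \<sigma>"
  shows "measure (PiM J (\<lambda>_. normal_measure \<mu> \<sigma>))
      {y \<in> space (PiM J (\<lambda>_. normal_measure \<mu> \<sigma>)). (\<Sum>i\<in>J. y i) / real (card J) > t}
    = std_normal_cdf ((\<mu> - t) * sqrt (real (card J)) / \<sigma>)"
proof -
  let ?P = "PiM J (\<lambda>_. normal_measure \<mu> \<sigma>)"
  interpret P: prob_space ?P
    using \<open>0 < \<sigma>\<close> by (intro prob_space_PiM prob_space_normal_density)
  define g where "g = real (card J)"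
  define s where "s = sqrt g * \<sigma>"
  define c where "c = (\<mu> - t) * sqrt g / \<sigma>"
  \<comment> \<open>the standardised shortfall of the group total below its mean: \<open>mean > t \<longleftrightarrow> W < c\<close>\<close>
  define W where "W y = (g * \<mu> - (\<Sum>i\<in>J. y i)) / s" for y :: "'a \<Rightarrow> real"
  have "g > 0" using J by (simp add: g_def card_gt_0_iff)
  then have "s > 0" using \<open>0 < \<sigma>\<close> by (simp add: s_def)
  have "distributed ?P lborel (\<lambda>y. \<Sum>i\<in>J. y i) (normal_density (g * \<mu>) s)"
    using distributed_sum_PiM_normal[OF J \<open>0 < \<sigma>\<close>] by (simp add: g_def s_def)
  from P.normal_density_affine[OF this \<open>s > 0\<close>, of "- 1 / s" "g * \<mu> / s"]
  have "distributed ?P lborel (\<lambda>y. g * \<mu> / s + (- 1 / s) * (\<Sum>i\<in>J. y i))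
      (normal_density (g * \<mu> / s + (- 1 / s) * (g * \<mu>)) (\<bar>- 1 / s\<bar> * s))"
    using \<open>s > 0\<close> by simp
  moreover have "(\<lambda>y. g * \<mu> / s + (- 1 / s) * (\<Sum>i\<in>J. y i)) = W"
    by (simp add: W_def fun_eq_iff diff_divide_distrib)
  moreover have "g * \<mu> / s + (- 1 / s) * (g * \<mu>) = 0" and "\<bar>- 1 / s\<bar> * s = 1"
    using \<open>s > 0\<close> by simp_all
  ultimately have W: "distributed ?P lborel W std_normal_density"
    by (simp only:)
  have "(\<Sum>i\<in>J. y i) / real (card J) > t \<longleftrightarrow> W y < c" for y
    using \<open>g > 0\<close> \<open>s > 0\<close> \<open>0 < \<sigma>\<close>
    by (simp add: W_def c_def s_def g_def[symmetric] field_simps)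
  then have "measure ?P {y \<in> space ?P. (\<Sum>i\<in>J. y i) / real (card J) > t} = measure (distr ?P lborel W) {..<c}"
    using W by (subst measure_distr) (auto simp: distributed_def vimage_def Int_def conj_commute)
  also have "\<dots> = measure (density lborel (\<lambda>x. ennreal (std_normal_density x))) {..c}"
    using W by (simp add: distributed_def measure_density_lessThan_eq_atMost)
  also have "\<dots> = std_normal_cdf c"
    by (simp add: std_normal_cdf_def cdf_def)
  finally show ?thesis
    by (simp add: c_def g_def)
qed

lemma vise_increment_merge:
  assumes "e < l" and "l < n"
  shows "vise_increment n l \<alpha> t (merge {..<l} {l..<n} (x, y)) e =
    (if (\<Sum>i\<in>{l..<n}. y i) / real (n - l) > t
     then egoist_gain l ((\<alpha> + real l / real n - 1) * real n) e x
     else egoist_gain l (\<alpha> * real n) e x)"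
proof -
  let ?\<zeta> = "merge {..<l} {l..<n} (x, y)"
  have "{i. i < l \<and> 0 < ?\<zeta> i} = {i. i < l \<and> 0 < x i}"
    by (auto simp: merge_def)
  moreover have "(\<Sum>i\<in>{l..<n}. ?\<zeta> i) = (\<Sum>i\<in>{l..<n}. y i)"
    by (rule sum.cong) (auto simp: merge_def)
  \<comment> \<open>the group's support contributes its \<open>n - l\<close> votes, lowering the egoists' quota to \<open>\<gamma>n\<close>\<close>
  moreover have "(\<alpha> + real l / real n - 1) * real n = \<alpha> * real n - real (n - l)"
    using assms by (simp add: field_simps of_nat_diff)
  ultimately show ?thesis
    using assms
    by (simp add: vise_increment_def vise_accepted_def vise_votes_for_def egoist_gain_def merge_def)
qed

lemma integrable_vise_increment:
  assumes "l \<le> n" and "e < n" and "0 < \<sigma>"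
  shows "integrable (proposal_space n \<mu> \<sigma>) (\<lambda>\<zeta>. vise_increment n l \<alpha> t \<zeta> e)"
  unfolding proposal_space_def
proof (rule Bochner_Integration.integrable_bound)
  let ?P = "PiM {..<n} (\<lambda>_. normal_measure \<mu> \<sigma>)"
  show "integrable ?P (\<lambda>\<zeta>. \<zeta> e)"
    using assms by (intro integrable_PiM_normal_component) auto
  have egoists: "{..<l} \<subseteq> {..<n}"
    using assms(1) by auto
  have "sets (normal_measure \<mu> \<sigma>) = sets borel"
    by simp
  note [measurable] = measurable_card_positive[OF egoists this]
  have "e \<in> {..<n}"
    using assms(2) by simp
  moreover have "i \<in> {..<n}" if "i \<in> {l..<n}" for i
    using that by simp
  ultimately show "(\<lambda>\<zeta>. vise_increment n l \<alpha> t \<zeta> e) \<in> borel_measurable ?P"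
    unfolding vise_increment_def[abs_def] vise_accepted_def vise_votes_for_def of_nat_add
    by measurable
  show "AE \<zeta> in ?P. norm (vise_increment n l \<alpha> t \<zeta> e) \<le> norm (\<zeta> e)"
    by (simp add: vise_increment_def)
qed

theorem proposition1:
  fixes n l e :: nat and \<mu> \<sigma> \<alpha> t :: real
  assumes "1 \<le> l" and "l \<le> n - 1" and "\<sigma> > 0"
    and "0 \<le> \<alpha>" and "\<alpha> \<le> 1"
    and "e < l"
  shows "integral\<^sup>L (proposal_space n \<mu> \<sigma>) (\<lambda>\<zeta>. vise_increment n l \<alpha> t \<zeta> e) =
      mu_plus \<mu> \<sigma> l ((\<alpha> + real l / real n - 1) * real n)
        * std_normal_cdf ((\<mu> - t) * sqrt (real (n - l)) / \<sigma>)
    + mu_plus \<mu> \<sigma> l (\<alpha> * real n)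
        * (1 - std_normal_cdf ((\<mu> - t) * sqrt (real (n - l)) / \<sigma>))"
proof -
  have "l < n" "e < l" and \<sigma>: "\<sigma> > 0"
    using assms by auto
  let ?N = "\<lambda>_::nat. normal_measure \<mu> \<sigma>" and ?J = "{l..<n}"
  let ?S = "{y \<in> space (PiM ?J ?N). (\<Sum>i\<in>?J. y i) / real (card ?J) > t}"
  have proposal_split: "proposal_space n \<mu> \<sigma> = PiM ({..<l} \<union> ?J) ?N"
    using \<open>l < n\<close> by (simp add: proposal_space_def ivl_disj_un(8))
  have "integral\<^sup>L (proposal_space n \<mu> \<sigma>) (\<lambda>\<zeta>. vise_increment n l \<alpha> t \<zeta> e) =
      measure (PiM ?J ?N) ?S * integral\<^sup>L (proposal_space l \<mu> \<sigma>) (egoist_gain l ((\<alpha> + real l / real n - 1) * real n) e)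
    + (1 - measure (PiM ?J ?N) ?S) * integral\<^sup>L (proposal_space l \<mu> \<sigma>) (egoist_gain l (\<alpha> * real n) e)"
    unfolding proposal_split proposal_space_def[of l]
  proof (rule integral_PiM_union_if)
    show "integrable (PiM ({..<l} \<union> ?J) ?N) (\<lambda>\<zeta>. vise_increment n l \<alpha> t \<zeta> e)"
      using integrable_vise_increment[of l n e \<sigma> \<mu> \<alpha> t] \<open>l < n\<close> \<open>e < l\<close> \<sigma> proposal_split by simp
    show "?S \<in> sets (PiM ?J ?N)"
      by measurable
  qed (use \<open>l < n\<close> \<open>e < l\<close> \<sigma> in \<open>auto simp: vise_increment_merge prob_space_normal_density
         intro: integrable_egoist_gain\<close>)
  then show ?thesis
    using \<open>l < n\<close> \<sigma> prob_PiM_normal_mean_gt[of ?J \<sigma> \<mu> t]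
    by (simp add: integral_egoist_gain_eq_mu_plus[OF \<open>e < l\<close> \<sigma>] algebra_simps)
qed

end
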